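(* Assume the setting and hypotheses of the following: $(y_i)_{i\ge1}$ is a real sequence, $\mathbf{y}=(y_1,\dots,y_n)$, $\overline{\mathbf{y}}_n=\frac1n\sum_{i\le n}y_i\to\overline{y}_\infty\ne0$; $q=q(n)$, $p=p(n)>0$, $T=T(n)\ge1$ integers with $\log n\le qn\le\sqrt n$ and $T=o(qn)$; $\mathbf{A}$ is the adjacency matrix of $G(n,q)$. Suppose moreover $npq\ge1+\epsilon$ for some fixed $\epsilon>0$ (i.e. $p\,\mathbb{E}[\lambda_1]\ge1+\epsilon$, using $\mathbb{E}[\lambda_1]=nq$). Fix an index $i$. Then: (a) if $T\le(1-\delta)\frac{\log n}{\log(npq)}$ for some fixed $\delta>0$, then $\mathbb{E}[\mathrm{CC}(\mathbf{A},p,T,\mathbf{y})_i]=o(n)$; (b) if $T\ge(1+\delta)\frac{\log n}{\log(npq)}$ for some fixed $\delta>0$, then $|\mathbb{E}[\mathrm{CC}(\mathbf{A},p,T,\mathbf{y})_i]|=\Omega(n)$, i.e. it is at least $cn$ for some $c>0$ and all large $n$.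
   Context: Contextual centrality: $\mathrm{CC}(\mathbf{A},p,T,\mathbf{y})=\sum_{t=0}^{T}(p\mathbf{A})^t\mathbf{y}$. $G(n,q)$ is the Erdős–Rényi random graph: its adjacency matrix is a random symmetric $n\times n$ matrix with zero diagonal and independent Bernoulli($q$) entries above the diagonal. $\log$ is the natural logarithm; $p,q,T$ depend on $n$ and asymptotics are as $n\to\infty$. *)

theory Defs
  imports "HOL-Analysis.Analysis" "HOL-Library.Landau_Symbols"
begin

text \<open>Vertices are 1..n. Matrices/vectors are functions on nat, used only on {1..n}.\<close>

definition vpairs :: "nat \<Rightarrow> (nat \<times> nat) set" where
  "vpairs n = {(a, b). 1 \<le> a \<and> a < b \<and> b \<le> n}"

definition adj :: "(nat \<times> nat) set \<Rightarrow> nat \<Rightarrow> nat \<Rightarrow> real" where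
  "adj E a b = (if (min a b, max a b) \<in> E \<and> a \<noteq> b then 1 else 0)"

definition gnp_weight :: "nat \<Rightarrow> real \<Rightarrow> (nat \<times> nat) set \<Rightarrow> real" where
  "gnp_weight n q E = q ^ card E * (1 - q) ^ (card (vpairs n) - card E)"

definition gnp_expect :: "nat \<Rightarrow> real \<Rightarrow> ((nat \<Rightarrow> nat \<Rightarrow> real) \<Rightarrow> real) \<Rightarrow> real" where
  "gnp_expect n q f = (\<Sum>E\<in>Pow (vpairs n). gnp_weight n q E * f (adj E))"

fun matpow :: "nat \<Rightarrow> (nat \<Rightarrow> nat \<Rightarrow> real) \<Rightarrow> nat \<Rightarrow> nat \<Rightarrow> nat \<Rightarrow> real" where
  "matpow n M 0 = (\<lambda>a b. if a = b then 1 else 0)"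
| "matpow n M (Suc t) = (\<lambda>a b. \<Sum>k=1..n. M a k * matpow n M t k b)"

definition mulvec :: "nat \<Rightarrow> (nat \<Rightarrow> nat \<Rightarrow> real) \<Rightarrow> (nat \<Rightarrow> real) \<Rightarrow> nat \<Rightarrow> real" where
  "mulvec n M y = (\<lambda>a. \<Sum>b=1..n. M a b * y b)"

definition CC :: "nat \<Rightarrow> (nat \<Rightarrow> nat \<Rightarrow> real) \<Rightarrow> real \<Rightarrow> nat \<Rightarrow> (nat \<Rightarrow> real) \<Rightarrow> nat \<Rightarrow> real" where
  "CC n A p T y = (\<lambda>a. \<Sum>t=0..T. mulvec n (matpow n (\<lambda>u v. p * A u v) t) y a)"

end

theory Submission
  imports Defs "HOL-Real_Asymp.Real_Asymp"
begin

text \<open>The distribution of \<open>G(n,q)\<close> is invariant under relabelling vertices, so the expected walk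
  matrix \<open>E[A^t]\<close> has a common diagonal entry \<open>a t\<close> and a common off-diagonal entry \<open>b t\<close>, and
  \<open>E[CC_i] = \<Sum>t\<le>T. p^t (y_i a t + b t (\<Sum>y - y_i))\<close>.
  Conditioning on the edges used so far shows \<open>a t + (n - 1) b t \<le> (nq + t)^t\<close>, so for
  \<open>T = o(nq)\<close> the expectation is at most \<open>(T + 1) (p n q)^T n^(\<delta>/4) \<le> n^(1 - 3\<delta>/4) log n = o(n)\<close>
  below the threshold. Conversely every vertex outside \<open>{i, j}\<close> is a neighbour of \<open>i\<close> with
  probability \<open>q\<close>, so \<open>b (t + 1) \<ge> q (n - 2) b t\<close> and \<open>p^T b T \<ge> (p (n - 2) q)^T / (n - 2) \<ge> 1\<close>
  above the threshold; there the term \<open>p^T b T (\<Sum>y - y_i) \<approx> p^T b T \<bar>ybar\<bar> n\<close> dominates.\<close>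

lemma sum_Pow_insert:
  assumes "finite V" "e \<notin> V"
  shows "(\<Sum>E\<in>Pow (insert e V). h E) = (\<Sum>E\<in>Pow V. h E + h (insert e E))"
proof -
  have "(\<Sum>E\<in>Pow (insert e V). h E) = (\<Sum>E\<in>Pow V. h E) + (\<Sum>E\<in>insert e ` Pow V. h E)"
    unfolding Pow_insert by (rule sum.union_disjoint) (use assms in auto)
  also have "(\<Sum>E\<in>insert e ` Pow V. h E) = (\<Sum>E\<in>Pow V. h (insert e E))"
    by (rule sum.reindex_cong[where l="insert e"]) (use assms in \<open>auto simp: inj_on_def\<close>)
  finally show ?thesis by (simp add: sum.distrib)
qed

definition bernoulli_weight :: "'a set \<Rightarrow> real \<Rightarrow> 'a set \<Rightarrow> real" where
  "bernoulli_weight V q E = q ^ card E * (1 - q) ^ (card V - card E)"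

lemma bernoulli_weight_insert_outside:
  assumes "finite V" "e \<notin> V" "E \<subseteq> V"
  shows "bernoulli_weight (insert e V) q E = (1 - q) * bernoulli_weight V q E"
proof -
  have "card E \<le> card V" using assms card_mono by blast
  then have "card (insert e V) - card E = Suc (card V - card E)" using assms by simp
  then show ?thesis unfolding bernoulli_weight_def by simp
qed

lemma bernoulli_weight_insert_inside:
  assumes "finite V" "e \<notin> V" "E \<subseteq> V"
  shows "bernoulli_weight (insert e V) q (insert e E) = q * bernoulli_weight V q E"
proof -
  have "finite E" "e \<notin> E" using assms finite_subset by auto
  then have "card (insert e E) = Suc (card E)" by simp
  moreover have "card (insert e V) = Suc (card V)" using assms by simp
  ultimately show ?thesis unfolding bernoulli_weight_def by simp
qed

lemma sum_bernoulli_weight: "finite V \<Longrightarrow> (\<Sum>E\<in>Pow V. bernoulli_weight V q E) = 1"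
proof (induction V rule: finite_induct)
  case empty
  then show ?case by (simp add: bernoulli_weight_def)
next
  case (insert e V)
  have "(\<Sum>E\<in>Pow (insert e V). bernoulli_weight (insert e V) q E)
      = (\<Sum>E\<in>Pow V. bernoulli_weight (insert e V) q E + bernoulli_weight (insert e V) q (insert e E))"
    by (rule sum_Pow_insert) (use insert in auto)
  also have "\<dots> = (\<Sum>E\<in>Pow V. bernoulli_weight V q E)"
    by (rule sum.cong)
       (use insert in \<open>auto simp: bernoulli_weight_insert_outside bernoulli_weight_insert_inside algebra_simps\<close>)
  finally show ?case using insert by simp
qed

lemma sum_bernoulli_weight_indicator:
  assumes "finite V" "e \<in> V"
  shows "(\<Sum>E\<in>Pow V. bernoulli_weight V q E * (if e \<in> E then g E else 0))
       = q * (\<Sum>E\<in>Pow V. bernoulli_weight V q E * g (insert e E))"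
proof -
  define V' where "V' = V - {e}"
  have V: "V = insert e V'" "e \<notin> V'" "finite V'" using assms unfolding V'_def by auto
  have "(\<Sum>E\<in>Pow V. bernoulli_weight V q E * (if e \<in> E then g E else 0))
      = (\<Sum>E\<in>Pow V'. q * (bernoulli_weight V' q E * g (insert e E)))"
    unfolding V(1) sum_Pow_insert[OF V(3,2)]
    by (rule sum.cong) (use V in \<open>auto simp: bernoulli_weight_insert_inside subset_iff\<close>)
  moreover have "(\<Sum>E\<in>Pow V. bernoulli_weight V q E * g (insert e E))
      = (\<Sum>E\<in>Pow V'. bernoulli_weight V' q E * g (insert e E))"
    unfolding V(1) sum_Pow_insert[OF V(3,2)]
    by (rule sum.cong)
       (use V in \<open>auto simp: bernoulli_weight_insert_outside bernoulli_weight_insert_inside algebra_simps\<close>)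
  ultimately show ?thesis by (simp add: sum_distrib_left)
qed

definition edge_expect :: "nat \<Rightarrow> real \<Rightarrow> ((nat \<times> nat) set \<Rightarrow> real) \<Rightarrow> real" where
  "edge_expect n q g = (\<Sum>E\<in>Pow (vpairs n). gnp_weight n q E * g E)"

lemma finite_vpairs [simp]: "finite (vpairs n)"
  by (rule finite_subset[of _ "{1..n} \<times> {1..n}"]) (auto simp: vpairs_def)

lemma gnp_weight_eq_bernoulli_weight: "gnp_weight n q E = bernoulli_weight (vpairs n) q E"
  unfolding gnp_weight_def bernoulli_weight_def ..

lemma gnp_expect_eq_edge_expect: "gnp_expect n q f = edge_expect n q (\<lambda>E. f (adj E))"
  unfolding gnp_expect_def edge_expect_def ..

lemma edge_expect_const [simp]: "edge_expect n q (\<lambda>_. c) = c"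
  using sum_bernoulli_weight[OF finite_vpairs, of n q]
  unfolding edge_expect_def gnp_weight_eq_bernoulli_weight by (simp add: sum_distrib_right[symmetric])

lemma edge_expect_mono:
  assumes "0 \<le> q" "q \<le> 1" "\<And>E. E \<subseteq> vpairs n \<Longrightarrow> g E \<le> h E"
  shows "edge_expect n q g \<le> edge_expect n q h"
  unfolding edge_expect_def gnp_weight_def
  by (rule sum_mono) (use assms in \<open>auto intro: mult_left_mono\<close>)

lemma edge_expect_nonneg:
  assumes "0 \<le> q" "q \<le> 1" "\<And>E. E \<subseteq> vpairs n \<Longrightarrow> 0 \<le> g E"
  shows "0 \<le> edge_expect n q g"
  using edge_expect_mono[of q n "\<lambda>_. 0" g] assms by simp

lemma edge_expect_cmult: "edge_expect n q (\<lambda>E. c * g E) = c * edge_expect n q g"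
  unfolding edge_expect_def by (simp add: algebra_simps sum_distrib_left)

lemma edge_expect_sum: "edge_expect n q (\<lambda>E. \<Sum>k\<in>K. g k E) = (\<Sum>k\<in>K. edge_expect n q (g k))"
  unfolding edge_expect_def by (simp add: sum_distrib_left sum.swap[of _ _ K])

lemma edge_expect_indicator:
  assumes "e \<in> vpairs n"
  shows "edge_expect n q (\<lambda>E. (if e \<in> E then 1 else 0) * g E) = q * edge_expect n q (\<lambda>E. g (insert e E))"
proof -
  have "(if e \<in> E then 1 else 0) * g E = (if e \<in> E then g E else 0)" for E by simp
  then show ?thesis
    using sum_bernoulli_weight_indicator[OF finite_vpairs assms, of q g]
    unfolding edge_expect_def gnp_weight_eq_bernoulli_weight by presburger
qed

definition edge :: "nat \<Rightarrow> nat \<Rightarrow> nat \<times> nat" where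
  "edge a b = (min a b, max a b)"

lemma edge_commute: "edge a b = edge b a"
  unfolding edge_def by (auto simp: min_def max_def)

lemma edge_inj_right: "edge v k = edge v k' \<Longrightarrow> k = k'"
  unfolding edge_def by (auto simp: min_def max_def split: if_splits)

lemma edge_in_vpairs: "a \<in> {1..n} \<Longrightarrow> b \<in> {1..n} \<Longrightarrow> a \<noteq> b \<Longrightarrow> edge a b \<in> vpairs n"
  unfolding edge_def vpairs_def by auto

lemma adj_off_diag: "a \<noteq> b \<Longrightarrow> adj E a b = (if edge a b \<in> E then 1 else 0)"
  unfolding adj_def edge_def by simp

lemma adj_nonneg [simp]: "0 \<le> adj E a b"
  and adj_le_1 [simp]: "adj E a b \<le> 1"
  and adj_diag [simp]: "adj E a a = 0"
  unfolding adj_def by auto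

lemma adj_mono: "E \<subseteq> E' \<Longrightarrow> adj E a b \<le> adj E' a b"
  unfolding adj_def by auto

lemma matpow_nonneg: "(\<And>u v. 0 \<le> M u v) \<Longrightarrow> 0 \<le> matpow n M t a b"
  by (induction t arbitrary: a) (auto intro!: sum_nonneg)

lemma matpow_mono:
  assumes "\<And>u v. 0 \<le> M u v" "\<And>u v. M u v \<le> M' u v"
  shows "matpow n M t a b \<le> matpow n M' t a b"
proof (induction t arbitrary: a)
  case 0
  then show ?case by simp
next
  case (Suc t)
  show ?case unfolding matpow.simps
    by (rule sum_mono, rule mult_mono) (use assms Suc matpow_nonneg[of M n t] order_trans in blast)+
qed

lemma matpow_scale: "matpow n (\<lambda>u v. p * M u v) t a b = p ^ t * matpow n M t a b"
  by (induction t arbitrary: a) (auto simp: sum_distrib_left algebra_simps)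

lemma matpow_Suc_row_sum:
  "(\<Sum>b=1..n. matpow n M (Suc t) v b) = (\<Sum>k=1..n. M v k * (\<Sum>b=1..n. matpow n M t k b))"
  by (simp add: sum_distrib_left) (rule sum.swap)

lemma matpow_adj_nonneg: "0 \<le> matpow n (adj E) t a b"
  by (rule matpow_nonneg) simp

lemma matpow_adj_mono: "E \<subseteq> E' \<Longrightarrow> matpow n (adj E) t a b \<le> matpow n (adj E') t a b"
  by (rule matpow_mono) (auto intro: adj_mono)

definition relabel_edge :: "nat \<Rightarrow> nat \<Rightarrow> nat \<times> nat \<Rightarrow> nat \<times> nat" where
  "relabel_edge x y e = edge (Transposition.transpose x y (fst e)) (Transposition.transpose x y (snd e))"

lemma relabel_edge_edge:
  "relabel_edge x y (edge a b) = edge (Transposition.transpose x y a) (Transposition.transpose x y b)"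
  unfolding relabel_edge_def edge_def by (cases "a \<le> b") (auto simp: min_def max_def edge_commute[unfolded edge_def])

lemma vpairs_eq_edge: "e \<in> vpairs n \<Longrightarrow> e = edge (fst e) (snd e)"
  unfolding vpairs_def edge_def by auto

lemma relabel_edge_involutory: "e \<in> vpairs n \<Longrightarrow> relabel_edge x y (relabel_edge x y e) = e"
  by (subst (1 2) vpairs_eq_edge) (auto simp: relabel_edge_edge)

lemma transpose_in_atLeastAtMost_iff:
  "x \<in> {1..n} \<Longrightarrow> y \<in> {1..n} \<Longrightarrow> Transposition.transpose x y a \<in> {1..n} \<longleftrightarrow> a \<in> {1..n}"
  by (auto simp: Transposition.transpose_def)

lemma relabel_edge_in_vpairs:
  assumes "x \<in> {1..n}" "y \<in> {1..n}" "e \<in> vpairs n"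
  shows "relabel_edge x y e \<in> vpairs n"
proof -
  obtain a b where e: "e = (a, b)" "a \<in> {1..n}" "b \<in> {1..n}" "a \<noteq> b"
    using assms(3) by (auto simp: vpairs_def)
  have "Transposition.transpose x y a \<in> {1..n}" "Transposition.transpose x y b \<in> {1..n}"
    using e assms(1,2) transpose_in_atLeastAtMost_iff by blast+
  moreover have "Transposition.transpose x y a \<noteq> Transposition.transpose x y b"
    using e(4) transpose_eq_imp_eq by metis
  ultimately show ?thesis
    unfolding e relabel_edge_def by (simp add: edge_in_vpairs)
qed

lemma relabel_edges_involutory:
  assumes "E \<subseteq> vpairs n"
  shows "relabel_edge x y ` relabel_edge x y ` E = E"
proof -
  have "relabel_edge x y ` relabel_edge x y ` E = (\<lambda>e. relabel_edge x y (relabel_edge x y e)) ` E"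
    by (simp add: image_image)
  also have "\<dots> = id ` E"
    by (rule image_cong) (use assms relabel_edge_involutory in auto)
  finally show ?thesis by simp
qed

lemma adj_relabel_edges:
  assumes "E \<subseteq> vpairs n"
  shows "adj (relabel_edge x y ` E) a b = adj E (Transposition.transpose x y a) (Transposition.transpose x y b)"
proof (cases "a = b")
  case False
  have "edge a b \<in> relabel_edge x y ` E \<longleftrightarrow> relabel_edge x y (edge a b) \<in> E"
  proof
    assume "edge a b \<in> relabel_edge x y ` E"
    then obtain e where "e \<in> E" "edge a b = relabel_edge x y e" by auto
    then show "relabel_edge x y (edge a b) \<in> E"
      using assms relabel_edge_involutory[of e n x y] by auto
  next
    assume "relabel_edge x y (edge a b) \<in> E"
    then have "relabel_edge x y (relabel_edge x y (edge a b)) \<in> relabel_edge x y ` E" by blast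
    then show "edge a b \<in> relabel_edge x y ` E" by (simp add: relabel_edge_edge)
  qed
  moreover have "Transposition.transpose x y a \<noteq> Transposition.transpose x y b"
    using False transpose_eq_imp_eq by metis
  ultimately show ?thesis
    using False by (simp add: adj_off_diag relabel_edge_edge)
qed simp

lemma matpow_adj_relabel_edges:
  assumes "E \<subseteq> vpairs n" "x \<in> {1..n}" "y \<in> {1..n}"
  shows "matpow n (adj (relabel_edge x y ` E)) t a b
       = matpow n (adj E) t (Transposition.transpose x y a) (Transposition.transpose x y b)"
proof (induction t arbitrary: a)
  case 0
  then show ?case by (auto dest: transpose_eq_imp_eq)
next
  case (Suc t)
  let ?\<tau> = "Transposition.transpose x y"
  have "matpow n (adj (relabel_edge x y ` E)) (Suc t) a b
      = (\<Sum>k=1..n. adj E (?\<tau> a) (?\<tau> k) * matpow n (adj E) t (?\<tau> k) (?\<tau> b))"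
    by (simp add: adj_relabel_edges[OF assms(1)] Suc)
  also have "\<dots> = (\<Sum>k=1..n. adj E (?\<tau> a) k * matpow n (adj E) t k (?\<tau> b))"
    by (rule sum.reindex_bij_betw) (use assms in auto)
  finally show ?case by simp
qed

lemma edge_expect_relabel_edges:
  assumes "x \<in> {1..n}" "y \<in> {1..n}"
  shows "edge_expect n q (\<lambda>E. g (relabel_edge x y ` E)) = edge_expect n q g"
proof -
  have "card (relabel_edge x y ` E) = card E" if "E \<subseteq> vpairs n" for E
    by (rule card_image, rule inj_on_inverseI[where g="relabel_edge x y"])
       (use that relabel_edge_involutory in blast)
  then show ?thesis
    unfolding edge_expect_def
    by (intro sum.reindex_bij_witness[where i="image (relabel_edge x y)" and j="image (relabel_edge x y)"])
       (use relabel_edges_involutory relabel_edge_in_vpairs[OF assms] in \<open>auto simp: gnp_weight_def\<close>)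
qed

definition expected_walks :: "nat \<Rightarrow> real \<Rightarrow> nat \<Rightarrow> nat \<Rightarrow> nat \<Rightarrow> real" where
  "expected_walks n q t a b = edge_expect n q (\<lambda>E. matpow n (adj E) t a b)"

lemma expected_walks_nonneg: "0 \<le> q \<Longrightarrow> q \<le> 1 \<Longrightarrow> 0 \<le> expected_walks n q t a b"
  unfolding expected_walks_def by (rule edge_expect_nonneg) (auto intro: matpow_adj_nonneg)

lemma expected_walks_0: "expected_walks n q 0 a b = (if a = b then 1 else 0)"
  unfolding expected_walks_def by simp

lemma expected_walks_Suc:
  "expected_walks n q (Suc t) a b = (\<Sum>k=1..n. edge_expect n q (\<lambda>E. adj E a k * matpow n (adj E) t k b))"
  unfolding expected_walks_def matpow.simps by (rule edge_expect_sum)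

lemma expected_walks_1:
  assumes "i \<in> {1..n}" "j \<in> {1..n}" "i \<noteq> j"
  shows "expected_walks n q 1 i j = q"
proof -
  have "matpow n (adj E) 1 i j = adj E i j" for E
    using assms by (simp add: if_distrib cong: if_cong)
  then have "expected_walks n q 1 i j = edge_expect n q (\<lambda>E. (if edge i j \<in> E then 1 else 0) * 1)"
    unfolding expected_walks_def using assms by (simp add: adj_off_diag)
  also have "\<dots> = q * edge_expect n q (\<lambda>_. 1)"
    by (rule edge_expect_indicator[OF edge_in_vpairs[OF assms]])
  finally show ?thesis by simp
qed

lemma expected_walks_transpose:
  assumes "x \<in> {1..n}" "y \<in> {1..n}"
  shows "expected_walks n q t (Transposition.transpose x y a) (Transposition.transpose x y b)
       = expected_walks n q t a b"
proof -
  have "expected_walks n q t (Transposition.transpose x y a) (Transposition.transpose x y b)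
      = edge_expect n q (\<lambda>E. matpow n (adj (relabel_edge x y ` E)) t a b)"
    unfolding expected_walks_def edge_expect_def
    by (rule sum.cong) (auto simp: matpow_adj_relabel_edges[OF _ assms])
  also have "\<dots> = expected_walks n q t a b"
    unfolding expected_walks_def by (rule edge_expect_relabel_edges[OF assms])
  finally show ?thesis .
qed

lemma expected_walks_commute:
  assumes "a \<in> {1..n}" "b \<in> {1..n}"
  shows "expected_walks n q t b a = expected_walks n q t a b"
  using expected_walks_transpose[OF assms, of q t a b] by simp

lemma expected_walks_off_diag_eq:
  assumes "i \<in> {1..n}" "j \<in> {1..n}" "k \<in> {1..n}" "i \<noteq> j" "i \<noteq> k"
  shows "expected_walks n q t i k = expected_walks n q t i j"
  using expected_walks_transpose[OF assms(3,2), of q t i k] assms by simp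

text \<open>By symmetry, a row of the expected walk matrix has only two distinct entries.\<close>

lemma sum_row_expected_walks:
  assumes "i \<in> {1..n}" "j \<in> {1..n}" "i \<noteq> j"
  shows "(\<Sum>b=1..n. f b * expected_walks n q t i b)
       = f i * expected_walks n q t i i + expected_walks n q t i j * (\<Sum>b\<in>{1..n} - {i}. f b)"
proof -
  have "(\<Sum>b=1..n. f b * expected_walks n q t i b)
      = f i * expected_walks n q t i i + (\<Sum>b\<in>{1..n} - {i}. f b * expected_walks n q t i b)"
    by (rule sum.remove) (use assms in auto)
  also have "(\<Sum>b\<in>{1..n} - {i}. f b * expected_walks n q t i b) = (\<Sum>b\<in>{1..n} - {i}. f b * expected_walks n q t i j)"
    by (rule sum.cong) (use expected_walks_off_diag_eq[OF assms(1,2) _ assms(3)] in auto)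
  finally show ?thesis by (simp add: sum_distrib_left mult.commute)
qed

text \<open>Expected number of walks of length \<open>t\<close> from \<open>v\<close> when the edges in \<open>F\<close> are forced to be present.\<close>

definition expected_row_sum :: "nat \<Rightarrow> real \<Rightarrow> (nat \<times> nat) set \<Rightarrow> nat \<Rightarrow> nat \<Rightarrow> real" where
  "expected_row_sum n q F t v = edge_expect n q (\<lambda>E. \<Sum>b=1..n. matpow n (adj (E \<union> F)) t v b)"

text \<open>A first step from \<open>v\<close> to \<open>k\<close> uses either a forced edge or an edge present with probability \<open>q\<close>;
  in the latter case that edge is forced for the rest of the walk. Hence each step has at most
  \<open>nq + |F| + t\<close> choices in expectation, which explains the bound of \<open>expected_row_sum_le\<close>.\<close>

lemma expected_first_step_le:
  assumes q: "0 \<le> q" "q \<le> 1"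
    and IH: "\<And>F' v'. F' \<subseteq> vpairs n \<Longrightarrow> v' \<in> {1..n} \<Longrightarrow>
      expected_row_sum n q F' t v' \<le> (real n * q + real (card F') + real t) ^ t"
    and F: "F \<subseteq> vpairs n" and v: "v \<in> {1..n}" and k: "k \<in> {1..n}"
  shows "edge_expect n q (\<lambda>E. adj (E \<union> F) v k * (\<Sum>b=1..n. matpow n (adj (E \<union> F)) t k b))
       \<le> (if k \<noteq> v \<and> edge v k \<in> F then 1 else q) * (real n * q + real (card F) + real (Suc t)) ^ t"
    (is "?lhs \<le> _ * ?B ^ t")
proof -
  have B0: "0 \<le> ?B" using q by simp
  have fF: "finite F" using finite_subset[OF F] by simp
  consider "k = v" | "k \<noteq> v" "edge v k \<in> F" | "k \<noteq> v" "edge v k \<notin> F" by blast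
  then show ?thesis
  proof cases
    case 1
    then show ?thesis using q B0 by simp
  next
    case 2
    then have "?lhs = expected_row_sum n q F t k"
      unfolding expected_row_sum_def by (simp add: adj_off_diag)
    also have "\<dots> \<le> (real n * q + real (card F) + real t) ^ t" by (rule IH[OF F k])
    also have "\<dots> \<le> ?B ^ t" by (rule power_mono) (use q in auto)
    finally show ?thesis using 2 by simp
  next
    case 3
    have e: "edge v k \<in> vpairs n" by (rule edge_in_vpairs) (use k v 3 in auto)
    have "?lhs = edge_expect n q
        (\<lambda>E. (if edge v k \<in> E then 1 else 0) * (\<Sum>b=1..n. matpow n (adj (E \<union> F)) t k b))"
      using 3 by (simp add: adj_off_diag)
    also have "\<dots> = q * expected_row_sum n q (insert (edge v k) F) t k"
      unfolding edge_expect_indicator[OF e] expected_row_sum_def by simp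
    also have "\<dots> \<le> q * (real n * q + real (card (insert (edge v k) F)) + real t) ^ t"
      by (rule mult_left_mono, rule IH) (use F k e q in auto)
    also have "\<dots> = q * ?B ^ t" using 3 fF by (simp add: algebra_simps)
    finally show ?thesis using 3 by simp
  qed
qed

lemma expected_row_sum_le:
  assumes q: "0 \<le> q" "q \<le> 1"
  shows "F \<subseteq> vpairs n \<Longrightarrow> v \<in> {1..n} \<Longrightarrow>
    expected_row_sum n q F t v \<le> (real n * q + real (card F) + real t) ^ t"
proof (induction t arbitrary: F v)
  case 0
  then show ?case by (simp add: expected_row_sum_def)
next
  case (Suc t)
  define B where "B = real n * q + real (card F) + real (Suc t)"
  have B0: "0 \<le> B" unfolding B_def using q by simp
  define P where "P k \<longleftrightarrow> k \<noteq> v \<and> edge v k \<in> F" for k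
  have "card {k \<in> {1..n}. P k} \<le> card F"
    by (rule card_inj_on_le[where f="edge v"])
       (use Suc.prems finite_subset[OF Suc.prems(1)] edge_inj_right in \<open>auto simp: P_def inj_on_def\<close>)
  have "(\<Sum>k=1..n. if P k then 1 else q) \<le> (\<Sum>k=1..n. (if P k then 1 else 0) + q)"
    by (rule sum_mono) (use q in auto)
  also have "\<dots> = real (card {k \<in> {1..n}. P k}) + real n * q"
    by (simp add: sum.distrib sum.inter_filter[symmetric])
  also have "\<dots> \<le> real (card F) + real n * q"
    using \<open>card {k \<in> {1..n}. P k} \<le> card F\<close> by simp
  finally have sum_le: "(\<Sum>k=1..n. if P k then 1 else q) \<le> real (card F) + real n * q" .
  have "expected_row_sum n q F (Suc t) v
      = (\<Sum>k=1..n. edge_expect n q (\<lambda>E. adj (E \<union> F) v k * (\<Sum>b=1..n. matpow n (adj (E \<union> F)) t k b)))"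
    unfolding expected_row_sum_def matpow_Suc_row_sum by (rule edge_expect_sum)
  also have "\<dots> \<le> (\<Sum>k=1..n. (if P k then 1 else q) * B ^ t)"
    unfolding P_def B_def
    by (rule sum_mono, rule expected_first_step_le[OF q Suc.IH]) (use Suc.prems in auto)
  also have "\<dots> = (\<Sum>k=1..n. if P k then 1 else q) * B ^ t" by (simp add: sum_distrib_right)
  also have "\<dots> \<le> (real (card F) + real n * q) * B ^ t"
    by (rule mult_right_mono) (use sum_le B0 in auto)
  also have "\<dots> \<le> B * B ^ t" by (rule mult_right_mono) (use B0 in \<open>auto simp: B_def\<close>)
  finally show ?case unfolding B_def by simp
qed

lemma expected_walks_row_le:
  assumes q: "0 \<le> q" "q \<le> 1" and ij: "i \<in> {1..n}" "j \<in> {1..n}" "i \<noteq> j"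
  shows "expected_walks n q t i i + (real n - 1) * expected_walks n q t i j \<le> (real n * q + real t) ^ t"
proof -
  have "expected_walks n q t i i + (real n - 1) * expected_walks n q t i j = expected_row_sum n q {} t i"
    using sum_row_expected_walks[OF ij, of "\<lambda>_. 1" q t] ij
    by (simp add: expected_row_sum_def expected_walks_def edge_expect_sum of_nat_diff)
  also have "\<dots> \<le> (real n * q + real t) ^ t"
    using expected_row_sum_le[OF q, of "{}" n i t] ij by simp
  finally show ?thesis .
qed

lemma expected_walks_step_ge:
  assumes q: "0 \<le> q" "q \<le> 1" and ijk: "i \<in> {1..n}" "j \<in> {1..n}" "i \<noteq> j" "k \<in> {1..n} - {i, j}"
  shows "q * expected_walks n q s i j \<le> edge_expect n q (\<lambda>E. adj E i k * matpow n (adj E) s k j)"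
proof -
  have e: "edge i k \<in> vpairs n" by (rule edge_in_vpairs) (use ijk in auto)
  have "expected_walks n q s i j = expected_walks n q s k j"
    using expected_walks_transpose[of i n k q s i j] ijk by auto
  also have "\<dots> \<le> edge_expect n q (\<lambda>E. matpow n (adj (insert (edge i k) E)) s k j)"
    unfolding expected_walks_def by (rule edge_expect_mono) (use q in \<open>auto intro: matpow_adj_mono\<close>)
  finally have "q * expected_walks n q s i j
      \<le> edge_expect n q (\<lambda>E. (if edge i k \<in> E then 1 else 0) * matpow n (adj E) s k j)"
    unfolding edge_expect_indicator[OF e] using q by (simp add: mult_left_mono)
  also have "\<dots> = edge_expect n q (\<lambda>E. adj E i k * matpow n (adj E) s k j)"
    using ijk by (simp add: adj_off_diag)
  finally show ?thesis .
qed

text \<open>Every vertex \<open>k \<notin> {i, j}\<close> is a neighbour of \<open>i\<close> with probability \<open>q\<close>, and walks from it to \<open>j\<close>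
  are, in expectation, as many as walks from \<open>i\<close> to \<open>j\<close>.\<close>

lemma expected_walks_off_diag_Suc_ge:
  assumes q: "0 \<le> q" "q \<le> 1" and ij: "i \<in> {1..n}" "j \<in> {1..n}" "i \<noteq> j"
  shows "q * (real n - 2) * expected_walks n q s i j \<le> expected_walks n q (Suc s) i j"
proof -
  have "card ({1..n} - {i, j}) = n - 2"
    using ij by (subst card_Diff_subset) auto
  then have "q * (real n - 2) * expected_walks n q s i j = (\<Sum>k\<in>{1..n} - {i, j}. q * expected_walks n q s i j)"
    using ij by (simp add: of_nat_diff)
  also have "\<dots> \<le> (\<Sum>k\<in>{1..n} - {i, j}. edge_expect n q (\<lambda>E. adj E i k * matpow n (adj E) s k j))"
    by (rule sum_mono, rule expected_walks_step_ge) (use q ij in auto)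
  also have "\<dots> \<le> expected_walks n q (Suc s) i j"
    unfolding expected_walks_Suc
    by (rule sum_mono2) (use q in \<open>auto intro!: edge_expect_nonneg mult_nonneg_nonneg matpow_adj_nonneg\<close>)
  finally show ?thesis .
qed

lemma expected_walks_diag_Suc_le:
  assumes q: "0 \<le> q" "q \<le> 1" and ij: "i \<in> {1..n}" "j \<in> {1..n}" "i \<noteq> j"
  shows "expected_walks n q (Suc s) i i \<le> (real n - 1) * expected_walks n q s i j"
proof -
  have step: "edge_expect n q (\<lambda>E. adj E i k * matpow n (adj E) s k i) \<le> expected_walks n q s i j"
    if k: "k \<in> {1..n} - {i}" for k
  proof -
    have "edge_expect n q (\<lambda>E. adj E i k * matpow n (adj E) s k i) \<le> expected_walks n q s k i"
      unfolding expected_walks_def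
      by (rule edge_expect_mono) (use q in \<open>auto intro!: mult_left_le_one_le matpow_adj_nonneg\<close>)
    also have "\<dots> = expected_walks n q s i j"
      using expected_walks_commute[OF ij(1), of k] expected_walks_off_diag_eq[OF ij(1,2) _ ij(3), of k] k
      by auto
    finally show ?thesis .
  qed
  have "expected_walks n q (Suc s) i i
      = (\<Sum>k\<in>{1..n} - {i}. edge_expect n q (\<lambda>E. adj E i k * matpow n (adj E) s k i))"
    unfolding expected_walks_Suc sum.remove[OF finite_atLeastAtMost ij(1)] by simp
  also have "\<dots> \<le> (\<Sum>k\<in>{1..n} - {i}. expected_walks n q s i j)"
    by (rule sum_mono) (rule step)
  also have "\<dots> = (real n - 1) * expected_walks n q s i j"
    using ij by (simp add: of_nat_diff)
  finally show ?thesis .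
qed

lemma gnp_expect_CC:
  assumes ij: "i \<in> {1..n}" "j \<in> {1..n}" "i \<noteq> j"
  shows "gnp_expect n q (\<lambda>A. CC n A p T y i)
    = (\<Sum>t=0..T. p ^ t * (y i * expected_walks n q t i i
                          + expected_walks n q t i j * ((\<Sum>b=1..n. y b) - y i)))"
proof -
  have "(\<Sum>b\<in>{1..n} - {i}. y b) = (\<Sum>b=1..n. y b) - y i"
    using ij by (simp add: sum_diff1)
  then have row: "(\<Sum>b=1..n. y b * expected_walks n q t i b)
      = y i * expected_walks n q t i i + expected_walks n q t i j * ((\<Sum>b=1..n. y b) - y i)" for t
    using sum_row_expected_walks[OF ij] by simp
  have "gnp_expect n q (\<lambda>A. CC n A p T y i)
      = edge_expect n q (\<lambda>E. \<Sum>t=0..T. p ^ t * (\<Sum>b=1..n. y b * matpow n (adj E) t i b))"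
    unfolding gnp_expect_eq_edge_expect CC_def mulvec_def matpow_scale
    by (simp add: sum_distrib_left mult_ac)
  also have "\<dots> = (\<Sum>t=0..T. p ^ t * (\<Sum>b=1..n. y b * expected_walks n q t i b))"
    unfolding expected_walks_def by (simp add: edge_expect_sum edge_expect_cmult)
  finally show ?thesis unfolding row .
qed

lemma power_mult_le_of_step:
  fixes b :: "nat \<Rightarrow> real"
  assumes "\<And>s. c * b s \<le> b (Suc s)" "0 \<le> c"
  shows "c ^ k * b s \<le> b (s + k)"
proof (induction k)
  case (Suc k)
  have "c ^ Suc k * b s = c * (c ^ k * b s)" by simp
  also have "\<dots> \<le> c * b (s + k)" by (rule mult_left_mono[OF Suc assms(2)])
  also have "\<dots> \<le> b (s + Suc k)" using assms(1)[of "s + k"] by simp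
  finally show ?case .
qed simp

lemma abs_lincomb_le:
  fixes a b N R u v :: real
  assumes "0 \<le> a" "0 \<le> b" "N > 1" "a + (N - 1) * b \<le> R"
  shows "\<bar>u * a + b * v\<bar> \<le> (\<bar>u\<bar> + \<bar>v\<bar> / (N - 1)) * R"
proof -
  have "0 \<le> (N - 1) * b" using assms by simp
  then have aR: "a \<le> R" using assms(4) by linarith
  have "(N - 1) * b \<le> R" using assms(1,4) by linarith
  then have "b \<le> R / (N - 1)" using assms(3) by (simp add: field_simps)
  with aR have "\<bar>u\<bar> * a + b * \<bar>v\<bar> \<le> \<bar>u\<bar> * R + R / (N - 1) * \<bar>v\<bar>"
    by (intro add_mono mult_left_mono mult_right_mono) auto
  moreover have "\<bar>u * a + b * v\<bar> \<le> \<bar>u\<bar> * a + b * \<bar>v\<bar>"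
    using assms(1,2) abs_triangle_ineq[of "u * a" "b * v"] by (simp add: abs_mult)
  ultimately show ?thesis by (simp add: algebra_simps)
qed

lemma abs_centrality_sum_le:
  fixes a b :: "nat \<Rightarrow> real" and N q p u v :: real
  assumes a0: "\<And>t. 0 \<le> a t" and b0: "\<And>t. 0 \<le> b t" and N: "N > 1"
    and row: "\<And>t. a t + (N - 1) * b t \<le> (N * q + real t) ^ t"
    and p: "p > 0" and q: "q \<ge> 0" and pd: "p * (N * q) \<ge> 1"
  shows "\<bar>\<Sum>t=0..T. p ^ t * (u * a t + b t * v)\<bar>
     \<le> (\<bar>u\<bar> + \<bar>v\<bar> / (N - 1)) * (real T + 1) * (p * (N * q + real T)) ^ T"
proof -
  define C where "C = \<bar>u\<bar> + \<bar>v\<bar> / (N - 1)"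
  define G where "G = p * (N * q + real T)"
  have C0: "0 \<le> C" unfolding C_def using N by simp
  have "p * (N * q) \<le> G" unfolding G_def using p by (intro mult_left_mono) auto
  then have G1: "1 \<le> G" using pd by linarith
  have term_le: "\<bar>p ^ t * (u * a t + b t * v)\<bar> \<le> C * G ^ T" if t: "t \<le> T" for t
  proof -
    have "\<bar>u * a t + b t * v\<bar> \<le> C * (N * q + real t) ^ t"
      unfolding C_def by (rule abs_lincomb_le[OF a0 b0 N row])
    then have "\<bar>p ^ t * (u * a t + b t * v)\<bar> \<le> p ^ t * (C * (N * q + real t) ^ t)"
      using p by (simp add: abs_mult mult_left_mono)
    also have "\<dots> = C * (p * (N * q + real t)) ^ t" by (simp add: power_mult_distrib)
    also have "\<dots> \<le> C * G ^ t"
      unfolding G_def using p q N t C0 by (simp add: mult_left_mono power_mono)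
    also have "\<dots> \<le> C * G ^ T"
      using power_increasing[OF t G1] C0 by (rule mult_left_mono)
    finally show ?thesis .
  qed
  have "\<bar>\<Sum>t=0..T. p ^ t * (u * a t + b t * v)\<bar> \<le> (\<Sum>t=0..T. \<bar>p ^ t * (u * a t + b t * v)\<bar>)"
    by (rule sum_abs)
  also have "\<dots> \<le> (\<Sum>t=0..T. C * G ^ T)"
    by (rule sum_mono) (simp add: term_le)
  also have "\<dots> = C * (real T + 1) * G ^ T" by simp
  finally show ?thesis unfolding C_def G_def .
qed

text \<open>Since \<open>b\<close> grows at least by the factor \<open>1 / p\<close> per step, each diagonal term
  \<open>p^(s+1) a (s + 1) \<le> (N - 1) p^(s+1) b s\<close> is bounded by the last off-diagonal term \<open>p^T b T\<close>.\<close>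

lemma sum_power_diag_le:
  fixes a b :: "nat \<Rightarrow> real" and N q p :: real
  assumes b0: "\<And>t. 0 \<le> b t" and N: "N > 2" and q: "q > 0" and p: "p > 0"
    and brec: "\<And>s. q * (N - 2) * b s \<le> b (Suc s)"
    and arec: "\<And>s. a (Suc s) \<le> (N - 1) * b s" and a00: "a 0 \<le> 1"
    and r: "p * (N - 2) * q \<ge> 1"
  shows "(\<Sum>t=0..T. p ^ t * a t) \<le> 1 + real T * ((N - 1) * (p ^ T * b T) / (q * (N - 2)))"
proof -
  define c where "c = q * (N - 2)"
  have c0: "c > 0" unfolding c_def using q N by simp
  have pc: "p * c \<ge> 1" using r unfolding c_def by (simp add: mult_ac)
  have continue: "p ^ Suc s * c * b s \<le> p ^ T * b T" if s: "Suc s \<le> T" for s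
  proof -
    define k where "k = T - s"
    have k: "1 \<le> k" "s + k = T" unfolding k_def using s by auto
    have "p ^ Suc s * c = p ^ s * (p * c) ^ 1" by simp
    also have "\<dots> \<le> p ^ s * (p * c) ^ k"
      by (intro mult_left_mono power_increasing k pc) (use p in auto)
    also have "\<dots> = p ^ T * c ^ k"
    proof -
      have "p ^ T = p ^ s * p ^ k" using k(2) power_add by metis
      then show ?thesis by (simp add: power_mult_distrib)
    qed
    finally have "p ^ Suc s * c * b s \<le> p ^ T * c ^ k * b s"
      using b0[of s] by (rule mult_right_mono)
    also have "\<dots> = p ^ T * (c ^ k * b s)" by (simp add: mult.assoc)
    also have "\<dots> \<le> p ^ T * b T"
      using power_mult_le_of_step[of c b k s] brec c0 p k unfolding c_def by (simp add: mult_left_mono)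
    finally show ?thesis .
  qed
  have "(\<Sum>t=Suc 0..T. p ^ t * a t) \<le> (\<Sum>t=Suc 0..T. (N - 1) * (p ^ T * b T) / c)"
  proof (rule sum_mono)
    fix t assume t: "t \<in> {Suc 0..T}"
    then obtain s where s: "t = Suc s" by (cases t) auto
    have "p ^ t * a t \<le> p ^ t * ((N - 1) * b s)" using arec[of s] p s by (simp add: mult_left_mono)
    also have "\<dots> = (N - 1) * (p ^ Suc s * c * b s) / c" using c0 s by (simp add: field_simps)
    also have "\<dots> \<le> (N - 1) * (p ^ T * b T) / c"
      by (intro divide_right_mono mult_left_mono continue) (use t s N c0 in auto)
    finally show "p ^ t * a t \<le> (N - 1) * (p ^ T * b T) / c" .
  qed
  then show ?thesis
    using a00 unfolding c_def by (simp add: sum.atLeast_Suc_atMost)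
qed

lemma abs_centrality_sum_ge:
  fixes a b :: "nat \<Rightarrow> real" and N q p u v :: real
  assumes a0: "\<And>t. 0 \<le> a t" and b0: "\<And>t. 0 \<le> b t" and N: "N > 2" and q: "q > 0" and p: "p > 0"
    and brec: "\<And>s. q * (N - 2) * b s \<le> b (Suc s)"
    and arec: "\<And>s. a (Suc s) \<le> (N - 1) * b s" and a00: "a 0 \<le> 1"
    and r: "p * (N - 2) * q \<ge> 1"
  shows "p ^ T * b T * (\<bar>v\<bar> - \<bar>u\<bar> * real T * (N - 1) / ((N - 2) * q)) - \<bar>u\<bar>
     \<le> \<bar>\<Sum>t=0..T. p ^ t * (u * a t + b t * v)\<bar>"
proof -
  have "p ^ T * b T * \<bar>v\<bar> \<le> \<bar>v\<bar> * (\<Sum>t=0..T. p ^ t * b t)"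
    using member_le_sum[of T "{0..T}" "\<lambda>t. p ^ t * b t"] p b0 by (simp add: mult_left_mono mult.commute)
  also have "\<dots> = \<bar>v * (\<Sum>t=0..T. p ^ t * b t)\<bar>"
    using p b0 by (simp add: abs_mult sum_nonneg)
  also have "\<dots> = \<bar>\<Sum>t=0..T. p ^ t * b t * v\<bar>"
    by (simp add: sum_distrib_left mult_ac)
  also have "\<dots> \<le> \<bar>\<Sum>t=0..T. p ^ t * (u * a t + b t * v)\<bar> + \<bar>u\<bar> * (\<Sum>t=0..T. p ^ t * a t)"
  proof -
    have "(\<Sum>t=0..T. p ^ t * b t * v)
        = (\<Sum>t=0..T. p ^ t * (u * a t + b t * v)) - u * (\<Sum>t=0..T. p ^ t * a t)"
      by (simp add: sum_distrib_left sum_subtractf[symmetric] algebra_simps)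
    moreover have "\<bar>u * (\<Sum>t=0..T. p ^ t * a t)\<bar> = \<bar>u\<bar> * (\<Sum>t=0..T. p ^ t * a t)"
      using p a0 by (simp add: abs_mult sum_nonneg)
    ultimately show ?thesis by linarith
  qed
  also have "\<bar>u\<bar> * (\<Sum>t=0..T. p ^ t * a t) \<le> \<bar>u\<bar> * (1 + real T * ((N - 1) * (p ^ T * b T) / (q * (N - 2))))"
    by (intro mult_left_mono sum_power_diag_le) (use assms in auto)
  finally show ?thesis
    using q N by (simp add: field_simps)
qed

lemma exists_other_vertex:
  fixes n i :: nat
  assumes "2 \<le> n"
  obtains j where "j \<in> {1..n}" "i \<noteq> j"
  using that[of "if i = 1 then 2 else 1"] assms by (auto split: if_splits)

lemma abs_gnp_expect_CC_le:
  assumes n: "2 \<le> n" and i: "i \<in> {1..n}" and q: "0 < q" "q \<le> 1" and p: "0 < p"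
    and pd: "1 \<le> p * (real n * q)"
  shows "\<bar>gnp_expect n q (\<lambda>A. CC n A p T y i)\<bar>
    \<le> (\<bar>y i\<bar> + \<bar>(\<Sum>b=1..n. y b) - y i\<bar> / (real n - 1)) * (real T + 1) * (p * (real n * q + real T)) ^ T"
proof -
  obtain j where j: "j \<in> {1..n}" "i \<noteq> j" using exists_other_vertex[OF n] by blast
  show ?thesis unfolding gnp_expect_CC[OF i j]
    by (rule abs_centrality_sum_le) (use q p pd n expected_walks_nonneg expected_walks_row_le[OF _ _ i j] in auto)
qed

lemma expected_walks_off_diag_ge:
  assumes q: "0 \<le> q" "q \<le> 1" and ij: "i \<in> {1..n}" "j \<in> {1..n}" "i \<noteq> j" and n: "2 \<le> n"
  shows "(q * (real n - 2)) ^ T * q \<le> expected_walks n q (Suc T) i j"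
proof -
  have "(q * (real n - 2)) ^ T * expected_walks n q 1 i j \<le> expected_walks n q (1 + T) i j"
    by (rule power_mult_le_of_step) (use expected_walks_off_diag_Suc_ge[OF q ij] q n in auto)
  then show ?thesis using expected_walks_1[OF ij] by simp
qed

lemma abs_gnp_expect_CC_ge:
  assumes n: "3 \<le> n" and i: "i \<in> {1..n}" and q: "0 < q" "q \<le> 1" and p: "0 < p" and T: "1 \<le> T"
    and r: "1 \<le> p * (real n - 2) * q"
    and W: "\<bar>y i\<bar> * real T * (real n - 1) / ((real n - 2) * q) \<le> \<bar>(\<Sum>b=1..n. y b) - y i\<bar>"
  shows "(p * (real n - 2) * q) ^ T / (real n - 2)
           * (\<bar>(\<Sum>b=1..n. y b) - y i\<bar> - \<bar>y i\<bar> * real T * (real n - 1) / ((real n - 2) * q)) - \<bar>y i\<bar>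
         \<le> \<bar>gnp_expect n q (\<lambda>A. CC n A p T y i)\<bar>"
    (is "?r / _ * ?W - _ \<le> _")
proof -
  have "2 \<le> n" using n by simp
  then obtain j where j: "j \<in> {1..n}" "i \<noteq> j" by (rule exists_other_vertex)
  obtain T' where T': "T = Suc T'" using T by (cases T) auto
  have W0: "0 \<le> ?W" using W by simp
  have "?r = p ^ T * ((q * (real n - 2)) ^ T' * q) * (real n - 2)"
    unfolding T' by (simp add: power_mult_distrib mult_ac)
  then have "?r / (real n - 2) = p ^ T * ((q * (real n - 2)) ^ T' * q)"
    using n by simp
  also have "\<dots> \<le> p ^ T * expected_walks n q T i j"
    unfolding T' using expected_walks_off_diag_ge[of q i n j T'] q i j n p by (simp add: mult_left_mono)
  finally have "?r / (real n - 2) * ?W \<le> p ^ T * expected_walks n q T i j * ?W"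
    using W0 by (rule mult_right_mono)
  moreover have "p ^ T * expected_walks n q T i j * ?W - \<bar>y i\<bar> \<le> \<bar>gnp_expect n q (\<lambda>A. CC n A p T y i)\<bar>"
    unfolding gnp_expect_CC[OF i j]
    by (rule abs_centrality_sum_ge)
       (use q p r n expected_walks_nonneg expected_walks_off_diag_Suc_ge[OF _ _ i j]
          expected_walks_diag_Suc_le[OF _ _ i j] expected_walks_0 in auto)
  ultimately show ?thesis by linarith
qed

lemma power_growth_le_powr:
  fixes d p x \<delta> :: real and T :: nat
  assumes d: "0 < d" and x: "0 < x" and pd: "1 \<le> p * d"
    and Tpd: "real T * ln (p * d) \<le> (1 - \<delta>) * ln x"
    and TT: "real T * real T / d \<le> \<delta> / 4 * ln x"
  shows "(p * (d + real T)) ^ T \<le> x powr (1 - 3 * \<delta> / 4)"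
proof -
  have "(p * d) ^ T = exp (real T * ln (p * d))"
    using pd by (simp add: exp_of_nat_mult)
  also have "\<dots> \<le> x powr (1 - \<delta>)"
    using Tpd x by (simp add: powr_def mult.commute)
  finally have main: "(p * d) ^ T \<le> x powr (1 - \<delta>)" .
  have "(1 + real T / d) ^ T \<le> exp (real T / d) ^ T"
    by (rule power_mono) (use d in auto)
  also have "\<dots> = exp (real T * real T / d)" by (simp add: exp_of_nat_mult[symmetric])
  also have "\<dots> \<le> x powr (\<delta> / 4)"
    using TT x by (simp add: powr_def mult.commute)
  finally have correction: "(1 + real T / d) ^ T \<le> x powr (\<delta> / 4)" .
  have "p * (d + real T) = (p * d) * (1 + real T / d)"
    using d by (simp add: field_simps)
  then have "(p * (d + real T)) ^ T = (p * d) ^ T * (1 + real T / d) ^ T"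
    by (simp only: power_mult_distrib)
  also have "\<dots> \<le> x powr (1 - \<delta>) * x powr (\<delta> / 4)"
    by (intro mult_mono main correction) (use d in auto)
  also have "\<dots> = x powr (1 - 3 * \<delta> / 4)"
    by (simp add: powr_add[symmetric])
  finally show ?thesis .
qed

lemma ln_one_minus_two_div_ge:
  fixes x :: real
  assumes "8 \<le> x"
  shows "- 3 / x \<le> ln (1 - 2 / x)"
proof -
  have "- (2 / x) - 2 * (2 / x)\<^sup>2 \<le> ln (1 - 2 / x)"
    by (rule ln_one_minus_pos_lower_bound) (use assms in auto)
  moreover have "2 * (2 / x)\<^sup>2 \<le> 1 / x" using assms by (simp add: power2_eq_square field_simps)
  ultimately show ?thesis by simp
qed

text \<open>Replacing \<open>n\<close> by \<open>n - 2\<close> costs a factor \<open>(1 - 2/n)^T \<ge> e^(-3T/n)\<close>, which is harmless since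
  \<open>T \<le> \<surd>n\<close>.\<close>

lemma power_growth_ge:
  fixes p q \<delta> :: real and n T :: nat
  assumes n: "9 \<le> n" and npq: "1 < real n * p * q" and T: "real T \<le> sqrt (real n)"
    and TL: "(1 + \<delta>) * ln (real n) \<le> real T * ln (real n * p * q)"
    and \<delta>: "1 \<le> \<delta> * ln (real n)"
  shows "real n \<le> (p * (real n - 2) * q) ^ T"
proof -
  define r where "r = p * (real n - 2) * q"
  have r_eq: "r = (real n * p * q) * (1 - 2 / real n)" unfolding r_def using n by (simp add: field_simps)
  have pos: "0 < real n * p * q" "0 < 1 - 2 / real n" using npq n by auto
  then have r0: "0 < r" unfolding r_eq by simp
  have "real T * 3 \<le> sqrt (real n) * 3" using T by simp
  also have "\<dots> \<le> sqrt (real n) * sqrt (real n)"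
    using real_le_rsqrt[of 3 "real n"] n by (intro mult_left_mono) auto
  finally have "real T * 3 \<le> real n" by simp
  then have small: "real T * (3 / real n) \<le> 1"
    using n by (simp add: field_simps)
  have "real T * (- 3 / real n) \<le> real T * ln (1 - 2 / real n)"
    using ln_one_minus_two_div_ge[of "real n"] n by (intro mult_left_mono) auto
  moreover have "ln r = ln (real n * p * q) + ln (1 - 2 / real n)"
    unfolding r_eq using pos by (rule ln_mult_pos)
  ultimately have "real T * ln (real n * p * q) - real T * (3 / real n) \<le> real T * ln r"
    by (simp add: distrib_left)
  then have "ln (real n) \<le> real T * ln r"
    using TL \<delta> small by (simp add: distrib_right)
  then have "exp (ln (real n)) \<le> exp (real T * ln r)" by simp
  then show ?thesis
    using n r0 unfolding r_def[symmetric] by (simp add: exp_of_nat_mult)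
qed

lemma abs_gnp_expect_CC_le_subcritical:
  fixes y :: "nat \<Rightarrow> real"
  assumes n: "3 \<le> n" and i: "i \<in> {1..n}" and q: "0 < q" "q \<le> 1" and p: "0 < p"
    and \<epsilon>: "0 < \<epsilon>" and \<delta>: "0 < \<delta>" and npq: "1 + \<epsilon> \<le> real n * p * q"
    and TA: "real T \<le> (1 - \<delta>) * ln (real n) / ln (real n * p * q)"
    and Tq: "real T \<le> \<delta> * ln (1 + \<epsilon>) / 4 * (q * real n)"
  shows "\<bar>gnp_expect n q (\<lambda>A. CC n A p T y i)\<bar>
    \<le> (\<bar>y i\<bar> + \<bar>(\<Sum>b=1..n. y b) - y i\<bar> / (real n - 1)) * (ln (real n) / ln (1 + \<epsilon>) + 1)
       * real n powr (1 - 3 * \<delta> / 4)"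
proof -
  have ln\<epsilon>: "0 < ln (1 + \<epsilon>)" using \<epsilon> by simp
  have lnn: "0 < ln (real n)" using n by simp
  have "ln (1 + \<epsilon>) \<le> ln (real n * p * q)" using npq \<epsilon> by simp
  then have Tpd: "real T * ln (real n * p * q) \<le> (1 - \<delta>) * ln (real n)"
    using TA ln\<epsilon> by (simp add: pos_le_divide_eq)
  have "real T * ln (1 + \<epsilon>) \<le> real T * ln (real n * p * q)"
    using \<open>ln (1 + \<epsilon>) \<le> _\<close> by (simp add: mult_left_mono)
  also have "\<dots> \<le> ln (real n)"
  proof -
    have "0 \<le> \<delta> * ln (real n)" using \<delta> lnn by simp
    then show ?thesis using Tpd by (simp add: left_diff_distrib)
  qed
  finally have TL: "real T \<le> ln (real n) / ln (1 + \<epsilon>)" using ln\<epsilon> by (simp add: pos_le_divide_eq)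
  have "real T * real T \<le> ln (real n) / ln (1 + \<epsilon>) * (\<delta> * ln (1 + \<epsilon>) / 4 * (q * real n))"
    by (intro mult_mono TL Tq) (use lnn ln\<epsilon> in auto)
  also have "\<dots> = \<delta> / 4 * ln (real n) * (real n * q)" using ln\<epsilon> by (simp add: field_simps)
  finally have TT: "real T * real T / (real n * q) \<le> \<delta> / 4 * ln (real n)"
    using q n by (simp add: pos_divide_le_eq)
  have pd: "p * (real n * q) = real n * p * q" by (simp add: mult_ac)
  have pd1: "1 \<le> p * (real n * q)" unfolding pd using npq \<epsilon> by simp
  have growth: "(p * (real n * q + real T)) ^ T \<le> real n powr (1 - 3 * \<delta> / 4)"
    by (rule power_growth_le_powr[OF _ _ pd1]) (use n q Tpd TT in \<open>simp_all add: pd\<close>)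
  have "\<bar>gnp_expect n q (\<lambda>A. CC n A p T y i)\<bar>
    \<le> (\<bar>y i\<bar> + \<bar>(\<Sum>b=1..n. y b) - y i\<bar> / (real n - 1)) * (real T + 1) * (p * (real n * q + real T)) ^ T"
    by (rule abs_gnp_expect_CC_le[OF _ i q p pd1]) (use n in simp)
  also have "\<dots> \<le> (\<bar>y i\<bar> + \<bar>(\<Sum>b=1..n. y b) - y i\<bar> / (real n - 1)) * (ln (real n) / ln (1 + \<epsilon>) + 1)
       * real n powr (1 - 3 * \<delta> / 4)"
  proof (rule mult_mono[OF mult_left_mono[OF add_right_mono[OF TL]] growth])
    show "0 \<le> \<bar>y i\<bar> + \<bar>(\<Sum>b=1..n. y b) - y i\<bar> / (real n - 1)" using n by simp
    then show "0 \<le> (\<bar>y i\<bar> + \<bar>(\<Sum>b=1..n. y b) - y i\<bar> / (real n - 1)) * (ln (real n) / ln (1 + \<epsilon>) + 1)"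
      using lnn ln\<epsilon> by simp
    show "0 \<le> (p * (real n * q + real T)) ^ T" using p q by simp
  qed
  finally show ?thesis .
qed

lemma abs_gnp_expect_CC_ge_supercritical:
  fixes y :: "nat \<Rightarrow> real"
  assumes n: "16 \<le> n" and i: "i \<in> {1..n}" and q: "0 < q" "q \<le> 1" and p: "0 < p" and T: "1 \<le> T"
    and npq: "1 < real n * p * q" and Tq: "real T \<le> q * real n" and qn: "q * real n \<le> sqrt (real n)"
    and TB: "(1 + \<delta>) * ln (real n) / ln (real n * p * q) \<le> real T"
    and \<delta>: "1 \<le> \<delta> * ln (real n)"
    and yiT: "\<bar>y i\<bar> * real T \<le> Y / 16 * (q * real n)"
    and Y: "3 / 4 * Y * real n \<le> \<bar>(\<Sum>b=1..n. y b) - y i\<bar>"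
    and yi: "\<bar>y i\<bar> \<le> Y / 4 * real n"
  shows "Y / 4 * real n \<le> \<bar>gnp_expect n q (\<lambda>A. CC n A p T y i)\<bar>"
proof -
  define r where "r = p * (real n - 2) * q"
  have TL: "(1 + \<delta>) * ln (real n) \<le> real T * ln (real n * p * q)"
    using TB npq by (simp add: pos_divide_le_eq)
  have Ts: "real T \<le> sqrt (real n)" using Tq qn by linarith
  have rT: "real n \<le> r ^ T"
    unfolding r_def by (rule power_growth_ge[OF _ npq Ts TL \<delta>]) (use n in simp)
  have r1: "1 \<le> r"
  proof (rule ccontr)
    assume "\<not> 1 \<le> r"
    moreover have "0 < r" unfolding r_def using p q n by simp
    ultimately have "r ^ T \<le> r ^ 1" by (intro power_decreasing) (use T in auto)
    then show False using rT n \<open>\<not> 1 \<le> r\<close> by simp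
  qed
  have "0 \<le> Y / 4 * real n" using yi by (meson abs_ge_zero order_trans)
  then have Y0: "0 \<le> Y" using n by (simp add: zero_le_mult_iff)
  have "\<bar>y i\<bar> * real T * (real n - 1) / ((real n - 2) * q)
      = \<bar>y i\<bar> * real T * ((real n - 1) / ((real n - 2) * q))" by simp
  also have "\<dots> \<le> Y / 16 * (q * real n) * ((real n - 1) / ((real n - 2) * q))"
    by (rule mult_right_mono[OF yiT]) (use n q in simp)
  also have "\<dots> = Y / 16 * real n * ((real n - 1) / (real n - 2))"
    using q n by (simp add: field_simps)
  also have "\<dots> \<le> Y / 16 * real n * 2"
    by (rule mult_left_mono) (use n Y0 in \<open>simp_all add: divide_le_eq\<close>)
  finally have small: "\<bar>y i\<bar> * real T * (real n - 1) / ((real n - 2) * q) \<le> Y / 8 * real n" by simp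
  define W where "W = \<bar>(\<Sum>b=1..n. y b) - y i\<bar> - \<bar>y i\<bar> * real T * (real n - 1) / ((real n - 2) * q)"
  have W: "Y / 2 * real n \<le> W" unfolding W_def using small Y by linarith
  have "0 \<le> Y / 2 * real n" using Y0 by simp
  then have W0: "0 \<le> W" using W by linarith
  have "1 \<le> r ^ T / (real n - 2)" using rT n by (simp add: le_divide_eq)
  from mult_right_mono[OF this W0] have "W \<le> r ^ T / (real n - 2) * W" by simp
  moreover have "r ^ T / (real n - 2) * W - \<bar>y i\<bar> \<le> \<bar>gnp_expect n q (\<lambda>A. CC n A p T y i)\<bar>"
    unfolding r_def W_def
  proof (rule abs_gnp_expect_CC_ge[OF _ i q p T r1[unfolded r_def]])
    have "0 \<le> Y * real n" using Y0 by simp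
    then show "\<bar>y i\<bar> * real T * (real n - 1) / ((real n - 2) * q) \<le> \<bar>(\<Sum>b=1..n. y b) - y i\<bar>"
      using small Y by linarith
  qed (use n in simp)
  ultimately show ?thesis using W yi by linarith
qed

lemma tendsto_shifted_mean:
  fixes f :: "nat \<Rightarrow> real"
  assumes "(\<lambda>n. f n / real n) \<longlonglongrightarrow> l"
  shows "(\<lambda>n. (f n - c) / (real n - a)) \<longlonglongrightarrow> l"
proof -
  have "(\<lambda>n. c / real n) \<longlonglongrightarrow> 0" "(\<lambda>n. real n / (real n - a)) \<longlonglongrightarrow> 1"
    by real_asymp+
  then have "(\<lambda>n. (f n / real n - c / real n) * (real n / (real n - a))) \<longlonglongrightarrow> (l - 0) * 1"
    by (intro tendsto_mult tendsto_diff assms)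
  then have lim: "(\<lambda>n. (f n / real n - c / real n) * (real n / (real n - a))) \<longlonglongrightarrow> l"
    by simp
  have "eventually (\<lambda>n. 0 < real n) sequentially" "eventually (\<lambda>n. a < real n) sequentially"
    by real_asymp+
  then have "eventually (\<lambda>n. (f n / real n - c / real n) * (real n / (real n - a))
      = (f n - c) / (real n - a)) sequentially"
    by eventually_elim (simp add: field_simps)
  with lim show ?thesis by (rule Lim_transform_eventually)
qed

lemma eventually_abs_shifted_mean_le:
  fixes f :: "nat \<Rightarrow> real"
  assumes "(\<lambda>n. f n / real n) \<longlonglongrightarrow> l"
  shows "eventually (\<lambda>n. \<bar>f n - c\<bar> / (real n - 1) \<le> \<bar>l\<bar> + 1) at_top"
  using tendstoD[OF tendsto_shifted_mean[OF assms, of c 1] zero_less_one] eventually_ge_at_top[of 2]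
proof eventually_elim
  case (elim n)
  have "\<bar>(f n - c) / (real n - 1)\<bar> < \<bar>l\<bar> + 1"
    using elim(1) abs_triangle_ineq2[of "(f n - c) / (real n - 1)" l] unfolding dist_real_def by linarith
  moreover have "\<bar>real n - 1\<bar> = real n - 1" using elim(2) by simp
  ultimately show ?case by (simp add: abs_divide)
qed

lemma eventually_abs_shifted_mean_ge:
  fixes f :: "nat \<Rightarrow> real"
  assumes "(\<lambda>n. f n / real n) \<longlonglongrightarrow> l" "l \<noteq> 0"
  shows "eventually (\<lambda>n. 3 / 4 * \<bar>l\<bar> * real n \<le> \<bar>f n - c\<bar>) at_top"
proof -
  have "0 < \<bar>l\<bar> / 4" using assms(2) by simp
  from tendstoD[OF tendsto_shifted_mean[OF assms(1), of c 0] this]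
  show ?thesis using eventually_ge_at_top[of 1]
  proof eventually_elim
    case (elim n)
    have "3 / 4 * \<bar>l\<bar> \<le> \<bar>(f n - c) / real n\<bar>"
      using elim(1) assms(2) abs_triangle_ineq2[of l "(f n - c) / real n"]
      unfolding dist_real_def by (simp add: abs_minus_commute)
    then show ?case using elim(2) by (simp add: abs_divide le_divide_eq)
  qed
qed

lemma eventually_le_of_smallo:
  fixes f g :: "nat \<Rightarrow> real"
  assumes "f \<in> o(g)" "0 < \<eta>" "eventually (\<lambda>n. 0 \<le> g n) at_top"
  shows "eventually (\<lambda>n. C * f n \<le> \<eta> * g n) at_top"
proof -
  have "0 < \<eta> / (\<bar>C\<bar> + 1)" using assms(2) by simp
  from landau_o.smallD[OF assms(1) this]
  show ?thesis using assms(3)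
  proof eventually_elim
    case (elim n)
    have "C * f n \<le> \<bar>C\<bar> * \<bar>f n\<bar>" by (metis abs_ge_self abs_mult)
    also have "\<dots> \<le> (\<bar>C\<bar> + 1) * (\<eta> / (\<bar>C\<bar> + 1) * g n)"
      using elim by (intro mult_mono) auto
    also have "\<dots> = \<eta> * g n" by simp
    finally show ?case .
  qed
qed

lemma eventually_nonneg_of_ln_le:
  fixes g :: "nat \<Rightarrow> real"
  assumes "eventually (\<lambda>n. ln (real n) \<le> g n) at_top"
  shows "eventually (\<lambda>n. 0 \<le> g n) at_top"
  using assms eventually_ge_at_top[of 1]
proof eventually_elim
  case (elim n)
  then have "0 \<le> ln (real n)" by simp
  with elim show ?case by linarith
qed

lemma pos_le_one_of_ln_le_le_sqrt:
  fixes q :: real and n :: nat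
  assumes "3 \<le> n" "ln (real n) \<le> q * real n" "q * real n \<le> sqrt (real n)"
  shows "0 < q" "q \<le> 1"
proof -
  have "0 < ln (real n)" using assms(1) by simp
  then have "0 < q * real n" using assms(2) by linarith
  then show "0 < q" using assms(1) by (simp add: zero_less_mult_iff)
  have "sqrt (real n) * 1 \<le> sqrt (real n) * sqrt (real n)"
    using assms(1) by (intro mult_left_mono) auto
  then have "q * real n \<le> 1 * real n" using assms(3) by simp
  then show "q \<le> 1" using assms(1) by (simp add: mult_le_cancel_right)
qed

lemma gnp_expect_CC_smallo:
  fixes y :: "nat \<Rightarrow> real" and p q :: "nat \<Rightarrow> real" and T :: "nat \<Rightarrow> nat"
  assumes ymean: "(\<lambda>n. (\<Sum>j=1..n. y j) / real n) \<longlonglongrightarrow> ybar"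
    and p_pos: "\<forall>n. p n > 0"
    and q_range: "eventually (\<lambda>n. ln (real n) \<le> q n * real n \<and> q n * real n \<le> sqrt (real n)) at_top"
    and T_small: "(\<lambda>n. real (T n)) \<in> o(\<lambda>n. q n * real n)"
    and \<epsilon>: "\<epsilon> > 0" and supercrit: "eventually (\<lambda>n. real n * p n * q n \<ge> 1 + \<epsilon>) at_top"
    and i: "1 \<le> i" and \<delta>: "\<delta> > 0"
    and subcrit: "eventually (\<lambda>n. real (T n) \<le> (1 - \<delta>) * ln (real n) / ln (real n * p n * q n)) at_top"
  shows "(\<lambda>n. gnp_expect n (q n) (\<lambda>A. CC n A (p n) (T n) y i)) \<in> o(\<lambda>n. real n)"
proof (rule landau_o.smallI)
  fix c :: real
  assume c: "0 < c"
  define K where "K = \<bar>y i\<bar> + \<bar>ybar\<bar> + 1"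
  define L where "L = ln (1 + \<epsilon>)"
  have L: "0 < L" unfolding L_def using \<epsilon> by simp
  have "eventually (\<lambda>n. 0 \<le> q n * real n) at_top"
    by (rule eventually_nonneg_of_ln_le) (use q_range in \<open>auto elim: eventually_mono\<close>)
  then have Tq: "eventually (\<lambda>n. real (T n) \<le> \<delta> * L / 4 * (q n * real n)) at_top"
    using eventually_le_of_smallo[OF T_small, of "\<delta> * L / 4" 1] \<delta> L by simp
  have "((\<lambda>n::nat. K * (M * ln (real n) + 1) * real n powr (- (3 * \<delta> / 4))) \<longlongrightarrow> 0) at_top" for M
    using \<delta> by real_asymp
  from this[of "1 / L"]
  have "((\<lambda>n::nat. K * (ln (real n) / L + 1) * real n powr (- (3 * \<delta> / 4))) \<longlongrightarrow> 0) at_top"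
    by simp
  then have decay: "eventually (\<lambda>n. K * (ln (real n) / L + 1) * real n powr (- (3 * \<delta> / 4)) \<le> c) at_top"
    by (rule eventually_mono[OF order_tendstoD(2)[OF _ c]]) auto
  show "eventually (\<lambda>n. norm (gnp_expect n (q n) (\<lambda>A. CC n A (p n) (T n) y i)) \<le> c * norm (real n)) at_top"
    using eventually_ge_at_top[of "max 3 i"] q_range supercrit subcrit Tq
      eventually_abs_shifted_mean_le[OF ymean, of "y i"] decay
  proof eventually_elim
    case (elim n)
    have n: "3 \<le> n" and i': "i \<in> {1..n}" using elim(1) i by auto
    have q: "0 < q n" "q n \<le> 1" using pos_le_one_of_ln_le_le_sqrt[of n "q n"] n elim(2) by auto
    have "\<bar>gnp_expect n (q n) (\<lambda>A. CC n A (p n) (T n) y i)\<bar>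
        \<le> (\<bar>y i\<bar> + \<bar>(\<Sum>b=1..n. y b) - y i\<bar> / (real n - 1)) * (ln (real n) / L + 1)
           * real n powr (1 - 3 * \<delta> / 4)"
      unfolding L_def
      by (rule abs_gnp_expect_CC_le_subcritical[OF n i' _ _ _ \<epsilon> \<delta> elim(3,4) elim(5)[unfolded L_def]])
         (use p_pos q n elim(2) in auto)
    also have "\<dots> \<le> K * (ln (real n) / L + 1) * real n powr (1 - 3 * \<delta> / 4)"
    proof (rule mult_right_mono[OF mult_right_mono])
      show "\<bar>y i\<bar> + \<bar>(\<Sum>b=1..n. y b) - y i\<bar> / (real n - 1) \<le> K" using elim(6) unfolding K_def by simp
      show "0 \<le> ln (real n) / L + 1" using n L by simp
    qed simp
    also have "real n powr (1 - 3 * \<delta> / 4) = real n powr 1 * real n powr (- (3 * \<delta> / 4))"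
      unfolding diff_conv_add_uminus by (rule powr_add)
    also have "K * (ln (real n) / L + 1) * (real n powr 1 * real n powr (- (3 * \<delta> / 4)))
        = K * (ln (real n) / L + 1) * real n powr (- (3 * \<delta> / 4)) * real n"
      by simp
    also have "\<dots> \<le> c * real n"
      by (rule mult_right_mono[OF elim(7)]) simp
    finally show ?case by simp
  qed
qed

lemma gnp_expect_CC_bigomega:
  fixes y :: "nat \<Rightarrow> real" and p q :: "nat \<Rightarrow> real" and T :: "nat \<Rightarrow> nat"
  assumes ymean: "(\<lambda>n. (\<Sum>j=1..n. y j) / real n) \<longlonglongrightarrow> ybar" and ybar: "ybar \<noteq> 0"
    and p_pos: "\<forall>n. p n > 0" and T_pos: "\<forall>n. T n \<ge> 1"
    and q_range: "eventually (\<lambda>n. ln (real n) \<le> q n * real n \<and> q n * real n \<le> sqrt (real n)) at_top"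
    and T_small: "(\<lambda>n. real (T n)) \<in> o(\<lambda>n. q n * real n)"
    and \<epsilon>: "\<epsilon> > 0" and supercrit: "eventually (\<lambda>n. real n * p n * q n \<ge> 1 + \<epsilon>) at_top"
    and i: "1 \<le> i" and \<delta>: "\<delta> > 0"
    and long: "eventually (\<lambda>n. real (T n) \<ge> (1 + \<delta>) * ln (real n) / ln (real n * p n * q n)) at_top"
  shows "\<exists>c>0. eventually (\<lambda>n. \<bar>gnp_expect n (q n) (\<lambda>A. CC n A (p n) (T n) y i)\<bar> \<ge> c * real n) at_top"
proof -
  have Y: "0 < \<bar>ybar\<bar>" and Y16: "0 < \<bar>ybar\<bar> / 16" using ybar by simp_all
  have qn_nonneg: "eventually (\<lambda>n. 0 \<le> q n * real n) at_top"
    by (rule eventually_nonneg_of_ln_le) (use q_range in \<open>auto elim: eventually_mono\<close>)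
  have "eventually (\<lambda>n. 1 \<le> \<delta> * ln (real n)) at_top" "eventually (\<lambda>n. \<bar>y i\<bar> \<le> \<bar>ybar\<bar> / 4 * real n) at_top"
    using \<delta> Y by real_asymp+
  then have "eventually (\<lambda>n. \<bar>ybar\<bar> / 4 * real n \<le> \<bar>gnp_expect n (q n) (\<lambda>A. CC n A (p n) (T n) y i)\<bar>) at_top"
    using eventually_ge_at_top[of "max 16 i"] q_range supercrit long
      eventually_le_of_smallo[OF T_small zero_less_one qn_nonneg, of 1]
      eventually_le_of_smallo[OF T_small Y16 qn_nonneg, of "\<bar>y i\<bar>"]
      eventually_abs_shifted_mean_ge[OF ymean ybar, of "y i"]
  proof eventually_elim
    case (elim n)
    have n: "16 \<le> n" and i': "i \<in> {1..n}" using elim(3) i by auto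
    have q: "0 < q n" "q n \<le> 1" using pos_le_one_of_ln_le_le_sqrt[of n "q n"] n elim(4) by auto
    show ?case
      by (rule abs_gnp_expect_CC_ge_supercritical[OF n i' q _ _ _ _ _ elim(6) elim(1) elim(8,9,2)])
         (use p_pos T_pos elim(4,5,7) \<epsilon> in auto)
  qed
  with Y show ?thesis by (intro exI[of _ "\<bar>ybar\<bar> / 4"]) simp
qed

theorem theorem2:
  fixes y :: "nat \<Rightarrow> real" and ybar :: real
    and p q :: "nat \<Rightarrow> real" and T :: "nat \<Rightarrow> nat"
    and \<epsilon> :: real and i :: nat
  assumes ymean: "(\<lambda>n. (\<Sum>j=1..n. y j) / real n) \<longlonglongrightarrow> ybar"
    and ybar_nz: "ybar \<noteq> 0"
    and p_pos: "\<forall>n. p n > 0"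
    and T_ge1: "\<forall>n. T n \<ge> 1"
    and q_range: "eventually (\<lambda>n. ln (real n) \<le> q n * real n \<and> q n * real n \<le> sqrt (real n)) at_top"
    and T_small: "(\<lambda>n. real (T n)) \<in> o(\<lambda>n. q n * real n)"
    and eps_pos: "\<epsilon> > 0"
    and supercrit: "eventually (\<lambda>n. real n * p n * q n \<ge> 1 + \<epsilon>) at_top"
    and i_pos: "i \<ge> 1"
  shows "(\<forall>\<delta>>0. eventually (\<lambda>n. real (T n) \<le> (1 - \<delta>) * ln (real n) / ln (real n * p n * q n)) at_top
            \<longrightarrow> (\<lambda>n. gnp_expect n (q n) (\<lambda>A. CC n A (p n) (T n) y i)) \<in> o(\<lambda>n. real n))
       \<and> (\<forall>\<delta>>0. eventually (\<lambda>n. real (T n) \<ge> (1 + \<delta>) * ln (real n) / ln (real n * p n * q n)) at_top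
            \<longrightarrow> (\<exists>c>0. eventually (\<lambda>n. \<bar>gnp_expect n (q n) (\<lambda>A. CC n A (p n) (T n) y i)\<bar> \<ge> c * real n) at_top))"
  using gnp_expect_CC_smallo[OF ymean p_pos q_range T_small eps_pos supercrit i_pos]
    gnp_expect_CC_bigomega[OF ymean ybar_nz p_pos T_ge1 q_range T_small eps_pos supercrit i_pos]
  by blast

end
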